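(* Let $\delta\ge 2$ and $s\in\{1,\dots,n\}$ with $r:=d_s-\delta+1\ge 1$, let $\tilde d=\sum_{i\ne s}(d_i-1)+d_s-\delta$, and let $d$ be an integer with $1\le d\le\tilde d$. If $d<r$ then $\dim_{\mathbb F_q}\mathcal D^{(\delta,s)}_{\mathcal X}(d)=\dim_{\mathbb F_q}\mathcal C_{\mathcal X}(d)$. If $r\le d\le\tilde d$ then $$\dim_{\mathbb F_q}\mathcal D^{(\delta,s)}_{\mathcal X}(d)=\dim_{\mathbb F_q}\mathcal C_{\mathcal X}(d)-\sum_{i=0}^{\delta-2}\dim_{\mathbb F_q}\mathcal C_{\mathcal X_s}(d-r-i),$$ where $\dim_{\mathbb F_q}\mathcal C_{\mathcal X_s}(e)$ is taken to be $0$ when $e<0$.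
   Context: Let $\mathbb F_q$ be a finite field, $K_1,\dots,K_n\subseteq\mathbb F_q$ nonempty, $d_i=|K_i|$, and $\mathcal X=K_1\times\cdots\times K_n=\{\boldsymbol\alpha_1,\dots,\boldsymbol\alpha_m\}$ (a fixed enumeration), $m=\prod_{i=1}^n d_i$. Let $\Psi:\mathbb F_q[X_1,\dots,X_n]\to\mathbb F_q^m$, $f\mapsto(f(\boldsymbol\alpha_1),\dots,f(\boldsymbol\alpha_m))$. For $d\ge 0$, $\mathbb F_q[X_1,\dots,X_n]_{\le d}$ is the space of polynomials of degree at most $d$ together with $0$. The affine cartesian code is $\mathcal C_{\mathcal X}(d)=\Psi(\mathbb F_q[X_1,\dots,X_n]_{\le d})$. For integers $\delta\ge 2$ and $s\in\{1,\dots,n\}$, $\mathcal P^{(\delta,s)}_d$ is the set of $f\in\mathbb F_q[X_1,\dots,X_n]_{\le d}$ with $\deg_{X_s}f<d_s-\delta+1$, together with $0$; the $(\delta,s)$-quasi affine cartesian code is $\mathcal D^{(\delta,s)}_{\mathcal X}(d)=\Psi(\mathcal P^{(\delta,s)}_d)$. Also $\mathcal X_s=K_1\times\cdots\times K_{s-1}\times K_{s+1}\times\cdots\times K_n\subseteq\mathbb F_q^{n-1}$, and $\mathcal C_{\mathcal X_s}(e)$ is the affine cartesian code of order $e$ defined in the same way over the sets $K_1,\dots,K_{s-1},K_{s+1},\dots,K_n$ (image of polynomials of degree $\le e$ in $n-1$ variables evaluated at the points of $\mathcal X_s$). *)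

theory Defs
  imports Complex_Main "HOL-Library.Function_Algebras"
begin

text \<open>Multivariate polynomials in the variables X_0,...,X_(n-1) (0-based indices)
  are represented by their coefficient functions: c :: (nat => nat) => 'a maps an
  exponent vector to its coefficient; c must have finite support and only involve
  the first n variables.\<close>

definition mpolys :: "nat \<Rightarrow> ((nat \<Rightarrow> nat) \<Rightarrow> 'a::zero) set" where
  "mpolys n = {c. finite {e. c e \<noteq> 0} \<and> (\<forall>e. c e \<noteq> 0 \<longrightarrow> (\<forall>i\<ge>n. e i = 0))}"

definition polys_le :: "nat \<Rightarrow> nat \<Rightarrow> ((nat \<Rightarrow> nat) \<Rightarrow> 'a::zero) set" where
  "polys_le n d = {c \<in> mpolys n. \<forall>e. c e \<noteq> 0 \<longrightarrow> (\<Sum>i<n. e i) \<le> d}"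

definition mpeval :: "nat \<Rightarrow> ((nat \<Rightarrow> nat) \<Rightarrow> 'a::comm_ring_1) \<Rightarrow> (nat \<Rightarrow> 'a) \<Rightarrow> 'a" where
  "mpeval n c x = (\<Sum>e\<in>{e. c e \<noteq> 0}. c e * (\<Prod>i<n. x i ^ e i))"

definition grid :: "nat \<Rightarrow> (nat \<Rightarrow> 'a set) \<Rightarrow> (nat \<Rightarrow> 'a) set" where
  "grid n K = {x. (\<forall>i<n. x i \<in> K i) \<and> (\<forall>i\<ge>n. x i = undefined)}"

text \<open>Evaluation map Psi: words are functions on the grid (coordinates indexed
  by the grid points, zero outside), i.e. vectors of F_q^m.\<close>
definition Psi :: "nat \<Rightarrow> (nat \<Rightarrow> 'a set) \<Rightarrow> ((nat \<Rightarrow> nat) \<Rightarrow> 'a::comm_ring_1)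
    \<Rightarrow> ((nat \<Rightarrow> 'a) \<Rightarrow> 'a)" where
  "Psi n K c = (\<lambda>x. if x \<in> grid n K then mpeval n c x else 0)"

definition aff_code :: "nat \<Rightarrow> (nat \<Rightarrow> 'a set) \<Rightarrow> nat \<Rightarrow> ((nat \<Rightarrow> 'a) \<Rightarrow> 'a::comm_ring_1) set" where
  "aff_code n K d = Psi n K ` polys_le n d"

definition quasi_polys :: "nat \<Rightarrow> (nat \<Rightarrow> 'a set) \<Rightarrow> nat \<Rightarrow> nat \<Rightarrow> nat
    \<Rightarrow> ((nat \<Rightarrow> nat) \<Rightarrow> 'a::zero) set" where
  "quasi_polys n K \<delta> s d =
     {c \<in> polys_le n d. \<forall>e. c e \<noteq> 0 \<longrightarrow> int (e s) < int (card (K s)) - int \<delta> + 1}"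

definition quasi_code :: "nat \<Rightarrow> (nat \<Rightarrow> 'a set) \<Rightarrow> nat \<Rightarrow> nat \<Rightarrow> nat
    \<Rightarrow> ((nat \<Rightarrow> 'a) \<Rightarrow> 'a::comm_ring_1) set" where
  "quasi_code n K \<delta> s d = Psi n K ` quasi_polys n K \<delta> s d"

text \<open>The sets K_i with K_s removed (re-indexed), giving X_s in n-1 variables.\<close>
definition drop_set :: "(nat \<Rightarrow> 'a set) \<Rightarrow> nat \<Rightarrow> nat \<Rightarrow> 'a set" where
  "drop_set K s = (\<lambda>i. if i < s then K i else K (Suc i))"

definition code_dim :: "((nat \<Rightarrow> 'a) \<Rightarrow> 'a::field) set \<Rightarrow> nat" where
  "code_dim C = vector_space.dim (\<lambda>a f. (\<lambda>x. a * f x)) C"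

definition dim_Xs :: "nat \<Rightarrow> (nat \<Rightarrow> 'a::field set) \<Rightarrow> nat \<Rightarrow> int \<Rightarrow> int" where
  "dim_Xs n K s e = (if e < 0 then 0
      else int (code_dim (aff_code (n - 1) (drop_set K s) (nat e) :: ((nat \<Rightarrow> 'a) \<Rightarrow> 'a) set)))"

end

theory Submission
  imports Defs "HOL-Computational_Algebra.Polynomial"
begin

text \<open>
  On K_i the power X_i^|K_i| is a linear combination of lower powers of X_i. Both codes are
  evaluations of polynomials supported on an exponent set that is closed under lowering single
  exponents, so each code is spanned by the evaluated monomials with reduced exponents
  e_i < |K_i| from that set. These are linearly independent on the grid: a univariate polynomial
  of degree < |K| vanishing on K is zero, applied one variable at a time. Hence both dimensions
  count reduced exponent vectors. Those of degree at most d with e_s \<ge> r = d_s - \<delta> + 1 split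
  into the fibres e_s = j for r \<le> j < d_s, and deleting the s-th coordinate identifies such a
  fibre with the reduced exponent vectors of X_s of degree at most d - j, whose number is
  dim C_(X_s)(d - j).
\<close>

subsection \<open>Univariate polynomials on a finite set\<close>

lemma coeffs_eq_0_if_vanishing_on:
  fixes b :: "nat \<Rightarrow> 'a::field"
  assumes "finite K" "N \<le> card K" "\<And>t. t \<in> K \<Longrightarrow> (\<Sum>k<N. b k * t ^ k) = 0" "k < N"
  shows "b k = 0"
proof -
  define p where "p = (\<Sum>k<N. monom (b k) k)"
  have coeff_p: "coeff p i = (if i < N then b i else 0)" for i
    by (simp add: p_def coeff_sum coeff_monom sum.delta)
  have "degree p < card K"
    using assms(2,4) by (intro le_less_trans[OF degree_le[of "N - 1"]]) (auto simp: coeff_p)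
  moreover have "poly p t = 0" if "t \<in> K" for t
    using assms(3)[OF that] by (simp add: p_def poly_sum poly_monom)
  ultimately have "p = 0"
    using assms(1) by (intro poly_eqI_degree[of K]) auto
  then show ?thesis
    using coeff_p[of k] assms(4) by simp
qed

lemma power_card_eq_lower_powers:
  fixes K :: "'a::field set"
  assumes "finite K"
  obtains a where "\<And>x. x \<in> K \<Longrightarrow> x ^ card K = (\<Sum>j<card K. a j * x ^ j)"
proof
  define p where "p = (\<Prod>y\<in>K. [:-y, 1:])"
  have deg: "degree p = card K"
    unfolding p_def by (subst degree_prod_sum_eq) auto
  have lead: "coeff p (card K) = 1"
    using lead_coeff_prod[of "\<lambda>y. [:-y, 1:]" K] deg by (simp add: p_def)
  fix x assume "x \<in> K"
  then have "poly p x = 0"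
    using assms unfolding p_def poly_prod by (intro prod_zero) auto
  then have "(\<Sum>j<card K. coeff p j * x ^ j) + x ^ card K = 0"
    unfolding poly_altdef deg by (simp add: lessThan_Suc_atMost[symmetric] lead)
  then show "x ^ card K = (\<Sum>j<card K. - coeff p j * x ^ j)"
    by (simp add: sum_negf add_eq_0_iff)
qed

subsection \<open>Reduced exponent vectors\<close>

lemma finite_bounded_exps: "finite {e::nat \<Rightarrow> nat. (\<forall>i<n. e i < N) \<and> (\<forall>i\<ge>n. e i = 0)}"
proof (rule finite_subset)
  show "{e::nat \<Rightarrow> nat. (\<forall>i<n. e i < N) \<and> (\<forall>i\<ge>n. e i = 0)} \<subseteq>
      {e. \<forall>x. (x \<in> {..<n} \<longrightarrow> e x \<in> {..<N}) \<and> (x \<notin> {..<n} \<longrightarrow> e x = 0)}"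
    by auto
qed (intro finite_set_of_finite_funs; simp)

definition reduced_exps :: "nat \<Rightarrow> (nat \<Rightarrow> 'a set) \<Rightarrow> (nat \<Rightarrow> nat) set" where
  "reduced_exps n K = {e. (\<forall>i<n. e i < card (K i)) \<and> (\<forall>i\<ge>n. e i = 0)}"

lemma finite_reduced_exps: "finite (reduced_exps n K)"
proof (rule finite_subset[OF _ finite_bounded_exps])
  show "reduced_exps n K \<subseteq> {e. (\<forall>i<n. e i < (\<Sum>j<n. card (K j))) \<and> (\<forall>i\<ge>n. e i = 0)}"
    unfolding reduced_exps_def
    using member_le_sum[of _ "{..<n}" "\<lambda>j. card (K j)"] by (fastforce intro: less_le_trans)
qed

lemma reduced_exps_less_card: "e \<in> reduced_exps n K \<Longrightarrow> i < n \<Longrightarrow> e i < card (K i)"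
  by (simp add: reduced_exps_def)

lemma reduced_exps_0: "reduced_exps 0 K = {0}"
  by (auto simp: reduced_exps_def)

lemma sum_reduced_exps_Suc:
  "(\<Sum>e\<in>reduced_exps (Suc m) K. f e) = (\<Sum>k<card (K m). \<Sum>e\<in>reduced_exps m K. f (e(m := k)))"
proof -
  let ?upd = "\<lambda>(e, k). e(m := k)"
  have image: "reduced_exps (Suc m) K = ?upd ` (reduced_exps m K \<times> {..<card (K m)})"
  proof (intro set_eqI iffI)
    fix e assume "e \<in> reduced_exps (Suc m) K"
    then have "(e(m := 0), e m) \<in> reduced_exps m K \<times> {..<card (K m)}"
      by (auto simp: reduced_exps_def)
    then show "e \<in> ?upd ` (reduced_exps m K \<times> {..<card (K m)})"
      by (auto intro!: image_eqI[of e _ "(e(m := 0), e m)"])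
  qed (auto simp: reduced_exps_def less_Suc_eq)
  have inj: "inj_on ?upd (reduced_exps m K \<times> {..<card (K m)})"
  proof (rule inj_onI, clarify)
    fix e k e' k'
    assume "e \<in> reduced_exps m K" "e' \<in> reduced_exps m K" and eq: "e(m := k) = e'(m := k')"
    then have "e = (e(m := k))(m := 0)" "e' = (e'(m := k'))(m := 0)"
      by (auto simp: reduced_exps_def fun_eq_iff)
    with eq show "e = e' \<and> k = k'"
      by (metis fun_upd_same)
  qed
  have "(\<Sum>e\<in>reduced_exps (Suc m) K. f e) =
      (\<Sum>(e, k)\<in>reduced_exps m K \<times> {..<card (K m)}. f (e(m := k)))"
    unfolding image sum.reindex[OF inj] by (simp add: split_def)
  also have "\<dots> = (\<Sum>e\<in>reduced_exps m K. \<Sum>k<card (K m). f (e(m := k)))"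
    by (rule sum.cartesian_product[symmetric])
  finally show ?thesis
    by (simp add: sum.swap[of _ "reduced_exps m K"])
qed

lemma reduced_poly_Suc_as_poly_in_last_var:
  fixes c :: "(nat \<Rightarrow> nat) \<Rightarrow> 'a::comm_semiring_1"
  shows "(\<Sum>e\<in>reduced_exps (Suc m) K. c e * (\<Prod>i<Suc m. (y(m := t)) i ^ e i)) =
    (\<Sum>k<card (K m). (\<Sum>e\<in>reduced_exps m K. c (e(m := k)) * (\<Prod>i<m. y i ^ e i)) * t ^ k)"
proof -
  have "(\<Prod>i<Suc m. (y(m := t)) i ^ (e(m := k)) i) = (\<Prod>i<m. y i ^ e i) * t ^ k" for e k
  proof -
    have "(\<Prod>i<m. (y(m := t)) i ^ (e(m := k)) i) = (\<Prod>i<m. y i ^ e i)"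
      by (rule prod.cong) auto
    then show ?thesis
      by (simp add: prod.lessThan_Suc)
  qed
  then show ?thesis
    unfolding sum_reduced_exps_Suc by (simp add: sum_distrib_right mult.assoc)
qed

lemma reduced_poly_eq_0_if_vanishing_on_grid:
  fixes K :: "nat \<Rightarrow> 'a::field set" and c :: "(nat \<Rightarrow> nat) \<Rightarrow> 'a"
  assumes fin: "\<And>i. finite (K i)"
  shows "(\<And>e. c e \<noteq> 0 \<Longrightarrow> e \<in> reduced_exps m K) \<Longrightarrow>
    (\<And>x. \<forall>i<m. x i \<in> K i \<Longrightarrow> (\<Sum>e\<in>reduced_exps m K. c e * (\<Prod>i<m. x i ^ e i)) = 0) \<Longrightarrow>
    c = 0"
proof (induction m arbitrary: c)
  case 0
  then show ?case
    by (fastforce simp: reduced_exps_0)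
next
  case (Suc m)
  have coeff_0: "(\<Sum>e\<in>reduced_exps m K. c (e(m := k)) * (\<Prod>i<m. y i ^ e i)) = 0"
    if y: "\<forall>i<m. y i \<in> K i" and k: "k < card (K m)" for y k
  proof (rule coeffs_eq_0_if_vanishing_on[OF fin order_refl _ k])
    fix t assume "t \<in> K m"
    with y have "\<forall>i<Suc m. (y(m := t)) i \<in> K i"
      by (simp add: less_Suc_eq)
    then show "(\<Sum>k<card (K m). (\<Sum>e\<in>reduced_exps m K. c (e(m := k)) * (\<Prod>i<m. y i ^ e i)) * t ^ k) = 0"
      unfolding reduced_poly_Suc_as_poly_in_last_var[symmetric] by (rule Suc.prems(2))
  qed
  define slice where "slice k e = (if e \<in> reduced_exps m K then c (e(m := k)) else 0)" for k e
  have slice_0: "slice k = 0" if "k < card (K m)" for k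
  proof (rule Suc.IH)
    show "slice k e \<noteq> 0 \<Longrightarrow> e \<in> reduced_exps m K" for e
      by (simp add: slice_def split: if_splits)
    show "(\<Sum>e\<in>reduced_exps m K. slice k e * (\<Prod>i<m. y i ^ e i)) = 0" if "\<forall>i<m. y i \<in> K i" for y
      using coeff_0[OF that \<open>k < card (K m)\<close>] by (simp add: slice_def)
  qed
  have "c e = 0" for e
  proof (cases "e \<in> reduced_exps (Suc m) K")
    case True
    then have "e(m := 0) \<in> reduced_exps m K" "e m < card (K m)"
      by (auto simp: reduced_exps_def)
    then have "c e = slice (e m) (e(m := 0))"
      by (simp add: slice_def)
    with slice_0 \<open>e m < card (K m)\<close> show ?thesis
      by simp
  qed (use Suc.prems(1) in auto)
  then show "c = 0"
    by auto
qed

subsection \<open>Monomials as functions on the grid\<close>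

interpretation words: vector_space
  "(\<lambda>a f x. a * f x) :: 'a::field \<Rightarrow> ((nat \<Rightarrow> 'a) \<Rightarrow> 'a) \<Rightarrow> (nat \<Rightarrow> 'a) \<Rightarrow> 'a"
  by unfold_locales (auto simp: algebra_simps fun_eq_iff)

lemma sum_fun_apply: "(\<Sum>a\<in>A. f a) x = (\<Sum>a\<in>A. f a x)"
  by (induction A rule: infinite_finite_induct) auto

definition grid_monom :: "nat \<Rightarrow> (nat \<Rightarrow> 'a set) \<Rightarrow> (nat \<Rightarrow> nat) \<Rightarrow> (nat \<Rightarrow> 'a) \<Rightarrow> 'a::comm_ring_1"
  where "grid_monom n K e = (\<lambda>x. if x \<in> grid n K then (\<Prod>i<n. x i ^ e i) else 0)"

lemma Psi_eq_sum_grid_monom: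
  assumes "finite A" "\<And>e. c e \<noteq> 0 \<Longrightarrow> e \<in> A"
  shows "Psi n K c = (\<Sum>e\<in>A. (\<lambda>x. c e * grid_monom n K e x))"
proof
  fix x
  have "mpeval n c x = (\<Sum>e\<in>A. c e * (\<Prod>i<n. x i ^ e i))"
    unfolding mpeval_def using assms by (intro sum.mono_neutral_left) auto
  then show "Psi n K c x = (\<Sum>e\<in>A. (\<lambda>x. c e * grid_monom n K e x)) x"
    by (simp add: Psi_def grid_monom_def sum_fun_apply)
qed

lemma reduced_coeffs_eq_0_if_grid_combination_eq_0:
  fixes K :: "nat \<Rightarrow> 'a::field set"
  assumes "\<And>i. finite (K i)" "\<And>e. c e \<noteq> 0 \<Longrightarrow> e \<in> reduced_exps n K"
    and comb: "(\<Sum>e\<in>reduced_exps n K. (\<lambda>x. c e * grid_monom n K e x)) = 0"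
  shows "c = 0"
  using assms(1,2)
proof (rule reduced_poly_eq_0_if_vanishing_on_grid)
  fix x :: "nat \<Rightarrow> 'a" assume x: "\<forall>i<n. x i \<in> K i"
  define x' where "x' i = (if i < n then x i else undefined)" for i
  have "x' \<in> grid n K"
    using x by (simp add: grid_def x'_def)
  then have "grid_monom n K e x' = (\<Prod>i<n. x i ^ e i)" for e
    by (simp add: grid_monom_def x'_def)
  then show "(\<Sum>e\<in>reduced_exps n K. c e * (\<Prod>i<n. x i ^ e i)) = 0"
    using fun_cong[OF comb, of x'] by (simp add: sum_fun_apply)
qed

lemma inj_on_grid_monom:
  fixes K :: "nat \<Rightarrow> 'a::field set"
  assumes "\<And>i. finite (K i)"
  shows "inj_on (grid_monom n K :: _ \<Rightarrow> _ \<Rightarrow> 'a) (reduced_exps n K)"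
proof (rule inj_onI, rule ccontr)
  fix e e' assume e: "e \<in> reduced_exps n K" "e' \<in> reduced_exps n K"
    and eq: "grid_monom n K e = (grid_monom n K e' :: _ \<Rightarrow> 'a)" and "e \<noteq> e'"
  define c :: "(nat \<Rightarrow> nat) \<Rightarrow> 'a" where "c = (\<lambda>f. if f = e then 1 else if f = e' then -1 else 0)"
  have "(\<Sum>f\<in>reduced_exps n K. (\<lambda>x. c f * grid_monom n K f x)) =
      (\<Sum>f\<in>{e, e'}. (\<lambda>x. c f * grid_monom n K f x))"
    using e by (intro sum.mono_neutral_right finite_reduced_exps) (auto simp: c_def)
  also have "\<dots> = (\<lambda>x. grid_monom n K e x - grid_monom n K e' x)"
    using \<open>e \<noteq> e'\<close> not_sym[OF \<open>e \<noteq> e'\<close>] by (simp add: c_def) (simp add: fun_eq_iff)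
  also have "\<dots> = 0"
    using eq by (simp add: zero_fun_def)
  finally have "c = 0"
    by (rule reduced_coeffs_eq_0_if_grid_combination_eq_0[OF assms, rotated])
      (use e in \<open>simp add: c_def split: if_splits\<close>)
  then have "c e = 0"
    by simp
  then show False
    by (simp add: c_def)
qed

lemma independent_grid_monom:
  fixes K :: "nat \<Rightarrow> 'a::field set"
  assumes fin: "\<And>i. finite (K i)"
  shows "words.independent (grid_monom n K ` reduced_exps n K :: ((nat \<Rightarrow> 'a) \<Rightarrow> 'a) set)"
proof -
  have "u v = 0"
    if comb: "(\<Sum>v\<in>grid_monom n K ` reduced_exps n K. (\<lambda>x. u v * v x)) = 0"
      and v: "v \<in> grid_monom n K ` reduced_exps n K"
    for u and v :: "(nat \<Rightarrow> 'a) \<Rightarrow> 'a"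
  proof -
    define c where "c e = (if e \<in> reduced_exps n K then u (grid_monom n K e) else 0)" for e
    have "(\<Sum>e\<in>reduced_exps n K. (\<lambda>x. c e * grid_monom n K e x)) =
        (\<Sum>e\<in>reduced_exps n K. (\<lambda>x. u (grid_monom n K e) * grid_monom n K e x))"
      by (rule sum.cong) (simp_all add: c_def)
    also have "\<dots> = 0"
      using comb by (simp only: sum.reindex[OF inj_on_grid_monom[OF fin]] comp_def)
    finally have "c = 0"
      by (rule reduced_coeffs_eq_0_if_grid_combination_eq_0[OF fin, rotated])
        (simp add: c_def split: if_splits)
    moreover obtain e where e: "e \<in> reduced_exps n K" "v = grid_monom n K e"
      using v by blast
    ultimately show "u v = 0"
      by (metis c_def zero_fun_apply)
  qed
  then show ?thesis
    unfolding words.dependent_finite[OF finite_imageI[OF finite_reduced_exps]] by blast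
qed

subsection \<open>Codes of down-closed exponent sets\<close>

lemma prod_power_fun_upd:
  fixes x :: "nat \<Rightarrow> 'a::comm_monoid_mult"
  assumes "i < n"
  shows "(\<Prod>l<n. x l ^ (e(i := k)) l) = x i ^ k * (\<Prod>l\<in>{..<n} - {i}. x l ^ e l)"
proof -
  have "(\<Prod>l\<in>{..<n} - {i}. x l ^ (e(i := k)) l) = (\<Prod>l\<in>{..<n} - {i}. x l ^ e l)"
    by (rule prod.cong) auto
  with assms show ?thesis
    by (subst prod.remove[of _ i]) auto
qed

lemma sum_fun_upd_less:
  fixes e :: "nat \<Rightarrow> nat"
  assumes "i < n" "k < e i"
  shows "(\<Sum>l<n. (e(i := k)) l) < (\<Sum>l<n. e l)"
proof -
  have "(\<Sum>l\<in>{..<n} - {i}. (e(i := k)) l) = (\<Sum>l\<in>{..<n} - {i}. e l)"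
    by (rule sum.cong) auto
  with assms show ?thesis
    by (simp add: sum.remove[of _ i])
qed

lemma grid_monom_reduce_exponent:
  fixes K :: "nat \<Rightarrow> 'a::field set"
  assumes "finite (K i)" "i < n" "card (K i) \<le> e i"
  obtains a where "grid_monom n K e =
    (\<Sum>j<card (K i). (\<lambda>x. a j * grid_monom n K (e(i := e i - card (K i) + j)) x))"
proof -
  let ?N = "card (K i)"
  obtain a where a: "\<And>t. t \<in> K i \<Longrightarrow> t ^ ?N = (\<Sum>j<?N. a j * t ^ j)"
    using power_card_eq_lower_powers[OF assms(1)] by blast
  have "grid_monom n K e x = (\<Sum>j<?N. a j * grid_monom n K (e(i := e i - ?N + j)) x)" for x
  proof (cases "x \<in> grid n K")
    case True
    then have "x i \<in> K i"
      using assms(2) by (simp add: grid_def)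
    define P where "P = (\<Prod>l\<in>{..<n} - {i}. x l ^ e l)"
    have "(\<Prod>l<n. x l ^ e l) = x i ^ (e i - ?N) * x i ^ ?N * P"
      using prod_power_fun_upd[OF assms(2), of x e "e i"] assms(3)
      by (simp add: P_def power_add[symmetric])
    also have "\<dots> = (\<Sum>j<?N. a j * (x i ^ (e i - ?N + j) * P))"
      by (simp add: a[OF \<open>x i \<in> K i\<close>] sum_distrib_left sum_distrib_right power_add algebra_simps)
    also have "\<dots> = (\<Sum>j<?N. a j * (\<Prod>l<n. x l ^ (e(i := e i - ?N + j)) l))"
      unfolding P_def prod_power_fun_upd[OF assms(2)] ..
    finally show ?thesis
      using True by (simp add: grid_monom_def)
  qed (simp add: grid_monom_def)
  then have "grid_monom n K e = (\<Sum>j<?N. (\<lambda>x. a j * grid_monom n K (e(i := e i - ?N + j)) x))"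
    by (simp add: fun_eq_iff sum_fun_apply)
  then show ?thesis
    by (rule that)
qed

definition exps_down_closed :: "nat \<Rightarrow> (nat \<Rightarrow> nat) set \<Rightarrow> bool" where
  "exps_down_closed n A \<longleftrightarrow> (\<forall>e\<in>A. (\<forall>i\<ge>n. e i = 0) \<and> (\<forall>i<n. \<forall>k<e i. e(i := k) \<in> A))"

lemma grid_monom_in_span_reduced:
  fixes K :: "nat \<Rightarrow> 'a::field set"
  assumes fin: "\<And>i. finite (K i)" and A: "exps_down_closed n A"
  shows "e \<in> A \<Longrightarrow> grid_monom n K e \<in> words.span (grid_monom n K ` (reduced_exps n K \<inter> A))"
proof (induction "\<Sum>l<n. e l" arbitrary: e rule: less_induct)
  case less
  show ?case
  proof (cases "e \<in> reduced_exps n K")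
    case True
    with less.prems show ?thesis
      by (intro words.span_base) auto
  next
    case False
    then obtain i where i: "i < n" "card (K i) \<le> e i"
      using A less.prems by (auto simp: reduced_exps_def exps_down_closed_def not_less)
    let ?e = "\<lambda>j. e(i := e i - card (K i) + j)"
    obtain a where a: "grid_monom n K e = (\<Sum>j<card (K i). (\<lambda>x. a j * grid_monom n K (?e j) x))"
      using grid_monom_reduce_exponent[of K i n e] fin i by blast
    have "grid_monom n K (?e j) \<in> words.span (grid_monom n K ` (reduced_exps n K \<inter> A))"
      if "j < card (K i)" for j
    proof (rule less.hyps)
      have "e i - card (K i) + j < e i"
        using i that by simp
      with A less.prems i(1) show "?e j \<in> A"
        by (auto simp: exps_down_closed_def)
      show "(\<Sum>l<n. ?e j l) < (\<Sum>l<n. e l)"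
        by (rule sum_fun_upd_less) fact+
    qed
    then show ?thesis
      unfolding a by (intro words.span_sum words.span_scale) auto
  qed
qed

lemma code_dim_Psi_down_closed:
  fixes K :: "nat \<Rightarrow> 'a::field set"
  assumes fin: "\<And>i. finite (K i)" and "finite A" and A: "exps_down_closed n A"
  shows "code_dim (Psi n K ` {c. \<forall>e. c e \<noteq> 0 \<longrightarrow> e \<in> A} :: ((nat \<Rightarrow> 'a) \<Rightarrow> 'a) set) =
    card (reduced_exps n K \<inter> A)"
proof -
  let ?P = "{c. \<forall>e. c e \<noteq> 0 \<longrightarrow> e \<in> A} :: ((nat \<Rightarrow> nat) \<Rightarrow> 'a) set"
  let ?B = "grid_monom n K ` (reduced_exps n K \<inter> A) :: ((nat \<Rightarrow> 'a) \<Rightarrow> 'a) set"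
  have inj: "inj_on (grid_monom n K :: _ \<Rightarrow> _ \<Rightarrow> 'a) (reduced_exps n K \<inter> A)"
    using inj_on_grid_monom[OF fin] by (rule inj_on_subset) auto
  have "Psi n K ` ?P \<subseteq> words.span ?B"
  proof
    fix v assume "v \<in> Psi n K ` ?P"
    then obtain c where "c \<in> ?P" "v = Psi n K c"
      by blast
    then have "v = (\<Sum>e\<in>A. (\<lambda>x. c e * grid_monom n K e x))"
      using Psi_eq_sum_grid_monom[OF \<open>finite A\<close>] by auto
    then show "v \<in> words.span ?B"
      using grid_monom_in_span_reduced[OF fin A] by (auto intro!: words.span_sum words.span_scale)
  qed
  moreover have "words.span ?B \<subseteq> Psi n K ` ?P"
  proof
    fix v assume "v \<in> words.span ?B"
    then obtain u where u: "v = (\<Sum>w\<in>?B. (\<lambda>x. u w * w x))"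
      using words.span_finite[of ?B] finite_reduced_exps[of n K] by auto
    define c where "c e = (if e \<in> reduced_exps n K \<inter> A then u (grid_monom n K e) else 0)" for e
    have "Psi n K c = (\<Sum>e\<in>reduced_exps n K \<inter> A. (\<lambda>x. c e * grid_monom n K e x))"
      by (rule Psi_eq_sum_grid_monom) (auto simp: finite_reduced_exps c_def split: if_splits)
    also have "\<dots> = (\<Sum>e\<in>reduced_exps n K \<inter> A. (\<lambda>x. u (grid_monom n K e) * grid_monom n K e x))"
      by (rule sum.cong) (simp_all add: c_def)
    also have "\<dots> = v"
      unfolding u by (simp only: sum.reindex[OF inj] comp_def)
    finally have "Psi n K c = v" .
    moreover have "c \<in> ?P"
      by (simp add: c_def)
    ultimately show "v \<in> Psi n K ` ?P"
      by blast
  qed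
  ultimately have "Psi n K ` ?P = words.span ?B"
    by blast
  moreover have "words.independent ?B"
    by (rule words.independent_mono[OF independent_grid_monom[OF fin]]) auto
  ultimately show ?thesis
    by (simp add: code_dim_def words.dim_eq_card_independent card_image[OF inj])
qed

definition exps_deg_le :: "nat \<Rightarrow> nat \<Rightarrow> (nat \<Rightarrow> nat) set" where
  "exps_deg_le n d = {e. (\<forall>i\<ge>n. e i = 0) \<and> (\<Sum>i<n. e i) \<le> d}"

lemma exp_le_deg: "e \<in> exps_deg_le n d \<Longrightarrow> i < n \<Longrightarrow> e i \<le> d"
  unfolding exps_deg_le_def using member_le_sum[of i "{..<n}" e] by auto

lemma finite_exps_deg_le: "finite (exps_deg_le n d)"
proof (rule finite_subset[OF _ finite_bounded_exps])
  show "exps_deg_le n d \<subseteq> {e. (\<forall>i<n. e i < Suc d) \<and> (\<forall>i\<ge>n. e i = 0)}"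
    using exp_le_deg by (auto simp: exps_deg_le_def less_Suc_eq_le)
qed

lemma exps_down_closed_deg_le: "exps_down_closed n (exps_deg_le n d)"
  using sum_fun_upd_less by (fastforce simp: exps_down_closed_def exps_deg_le_def)

lemma polys_le_eq_supported: "polys_le n d = {c. \<forall>e. c e \<noteq> 0 \<longrightarrow> e \<in> exps_deg_le n d}"
proof -
  have "finite {e. c e \<noteq> 0}" if "\<forall>e. c e \<noteq> 0 \<longrightarrow> e \<in> exps_deg_le n d" for c :: "_ \<Rightarrow> 'a"
    using that by (intro finite_subset[OF _ finite_exps_deg_le]) auto
  then show ?thesis
    by (auto simp: polys_le_def mpolys_def exps_deg_le_def)
qed

lemma code_dim_aff_code:
  fixes K :: "nat \<Rightarrow> 'a::{finite, field} set"
  shows "code_dim (aff_code n K d) = card (reduced_exps n K \<inter> exps_deg_le n d)"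
  unfolding aff_code_def polys_le_eq_supported
  by (simp add: code_dim_Psi_down_closed finite_exps_deg_le exps_down_closed_deg_le)

text \<open>With truncated subtraction the bound |K s| + 1 - \<delta> is 0 exactly when the integer bound in
  quasi_polys is not positive, so no assumption on \<delta> is needed.\<close>

lemma code_dim_quasi_code:
  fixes K :: "nat \<Rightarrow> 'a::{finite, field} set"
  shows "code_dim (quasi_code n K \<delta> s d) =
    card {e \<in> reduced_exps n K \<inter> exps_deg_le n d. e s < card (K s) + 1 - \<delta>}"
proof -
  let ?A = "exps_deg_le n d \<inter> {e. e s < card (K s) + 1 - \<delta>}"
  have "quasi_polys n K \<delta> s d = {c. \<forall>e. c e \<noteq> 0 \<longrightarrow> e \<in> ?A}"
    unfolding quasi_polys_def polys_le_eq_supported by auto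
  moreover have "exps_down_closed n ?A"
    using exps_down_closed_deg_le[of n d] by (auto simp: exps_down_closed_def)
  ultimately have "code_dim (quasi_code n K \<delta> s d) = card (reduced_exps n K \<inter> ?A)"
    unfolding quasi_code_def by (simp only:) (rule code_dim_Psi_down_closed; simp add: finite_exps_deg_le)
  also have "reduced_exps n K \<inter> ?A =
      {e \<in> reduced_exps n K \<inter> exps_deg_le n d. e s < card (K s) + 1 - \<delta>}"
    by auto
  finally show ?thesis .
qed

subsection \<open>Deleting the coordinate s\<close>

definition skip_index :: "nat \<Rightarrow> nat \<Rightarrow> nat" where
  "skip_index s i = (if i < s then i else Suc i)"

definition drop_coord :: "nat \<Rightarrow> (nat \<Rightarrow> 'b) \<Rightarrow> nat \<Rightarrow> 'b" where
  "drop_coord s e = e \<circ> skip_index s"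

definition insert_coord :: "nat \<Rightarrow> 'b \<Rightarrow> (nat \<Rightarrow> 'b) \<Rightarrow> nat \<Rightarrow> 'b" where
  "insert_coord s j e = (\<lambda>i. if i < s then e i else if i = s then j else e (i - 1))"

lemma inj_skip_index: "inj (skip_index s)"
  by (rule injI) (auto simp: skip_index_def split: if_splits)

lemma skip_index_image_lessThan:
  assumes "s < n"
  shows "skip_index s ` {..<n - 1} = {..<n} - {s}"
proof
  show "skip_index s ` {..<n - 1} \<subseteq> {..<n} - {s}"
    by (auto simp: skip_index_def)
  show "{..<n} - {s} \<subseteq> skip_index s ` {..<n - 1}"
  proof
    fix i assume "i \<in> {..<n} - {s}"
    with assms have "i = skip_index s (if i < s then i else i - 1)" "(if i < s then i else i - 1) \<in> {..<n - 1}"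
      by (auto simp: skip_index_def)
    then show "i \<in> skip_index s ` {..<n - 1}"
      by blast
  qed
qed

lemma skip_index_image_atLeast:
  assumes "s < n"
  shows "skip_index s ` {n - 1..} = {n..}"
proof
  show "skip_index s ` {n - 1..} \<subseteq> {n..}"
    using assms by (auto simp: skip_index_def)
  show "{n..} \<subseteq> skip_index s ` {n - 1..}"
  proof
    fix i assume "i \<in> {n..}"
    with assms have "i = skip_index s (i - 1)" "i - 1 \<in> {n - 1..}"
      by (auto simp: skip_index_def)
    then show "i \<in> skip_index s ` {n - 1..}"
      by blast
  qed
qed

lemma drop_set_eq_drop_coord: "drop_set K s = drop_coord s K"
  by (simp add: drop_set_def drop_coord_def skip_index_def fun_eq_iff)

lemma card_drop_coord_fiber:
  fixes T :: "(nat \<Rightarrow> 'b) set"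
  shows "card {e. e s = j \<and> drop_coord s e \<in> T} = card T"
proof (rule bij_betw_same_card[OF bij_betw_byWitness[where f' = "insert_coord s j"]])
  have "drop_coord s (insert_coord s j e) = e" for e :: "nat \<Rightarrow> 'b"
    by (simp add: drop_coord_def insert_coord_def skip_index_def fun_eq_iff)
  moreover have "insert_coord s j (drop_coord s e) = e" if "e s = j" for e :: "nat \<Rightarrow> 'b"
    using that by (auto simp: drop_coord_def insert_coord_def skip_index_def fun_eq_iff)
  ultimately show "\<forall>e\<in>{e. e s = j \<and> drop_coord s e \<in> T}. insert_coord s j (drop_coord s e) = e"
    "\<forall>e\<in>T. drop_coord s (insert_coord s j e) = e"
    "drop_coord s ` {e. e s = j \<and> drop_coord s e \<in> T} \<subseteq> T"
    "insert_coord s j ` T \<subseteq> {e. e s = j \<and> drop_coord s e \<in> T}"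
    by (auto simp: insert_coord_def)
qed

lemma sum_drop_coord:
  fixes e :: "nat \<Rightarrow> 'b::comm_monoid_add"
  assumes "s < n"
  shows "(\<Sum>i<n. e i) = e s + (\<Sum>i<n - 1. drop_coord s e i)"
proof -
  have "(\<Sum>i<n - 1. drop_coord s e i) = (\<Sum>i\<in>skip_index s ` {..<n - 1}. e i)"
    by (simp add: drop_coord_def sum.reindex[OF inj_on_subset[OF inj_skip_index]])
  also have "\<dots> = (\<Sum>i\<in>{..<n} - {s}. e i)"
    by (simp only: skip_index_image_lessThan[OF assms])
  finally show ?thesis
    using assms by (simp add: sum.remove)
qed

lemma reduced_exps_drop_coord_iff:
  assumes "s < n" "e s < card (K s)"
  shows "e \<in> reduced_exps n K \<longleftrightarrow> drop_coord s e \<in> reduced_exps (n - 1) (drop_set K s)"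
proof -
  have "e \<in> reduced_exps n K \<longleftrightarrow> (\<forall>i\<in>{..<n} - {s}. e i < card (K i)) \<and> (\<forall>i\<in>{n..}. e i = 0)"
    using assms by (auto simp: reduced_exps_def)
  also have "\<dots> \<longleftrightarrow> (\<forall>i\<in>skip_index s ` {..<n - 1}. e i < card (K i)) \<and>
      (\<forall>i\<in>skip_index s ` {n - 1..}. e i = 0)"
    using assms by (simp only: skip_index_image_lessThan skip_index_image_atLeast)
  also have "\<dots> \<longleftrightarrow> drop_coord s e \<in> reduced_exps (n - 1) (drop_set K s)"
    by (auto simp: reduced_exps_def drop_set_eq_drop_coord drop_coord_def)
  finally show ?thesis .
qed

lemma exps_deg_le_drop_coord_iff:
  assumes "s < n" "e s \<le> d"
  shows "e \<in> exps_deg_le n d \<longleftrightarrow> drop_coord s e \<in> exps_deg_le (n - 1) (d - e s)"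
proof -
  have "e \<in> exps_deg_le n d \<longleftrightarrow> (\<forall>i\<in>{n..}. e i = 0) \<and> (\<Sum>i<n - 1. drop_coord s e i) \<le> d - e s"
    using assms by (auto simp: exps_deg_le_def sum_drop_coord[OF assms(1), of e])
  also have "\<dots> \<longleftrightarrow> (\<forall>i\<in>skip_index s ` {n - 1..}. e i = 0) \<and> (\<Sum>i<n - 1. drop_coord s e i) \<le> d - e s"
    by (simp only: skip_index_image_atLeast[OF assms(1)])
  also have "\<dots> \<longleftrightarrow> drop_coord s e \<in> exps_deg_le (n - 1) (d - e s)"
    by (auto simp: exps_deg_le_def drop_coord_def)
  finally show ?thesis .
qed

lemma card_fiber_reduced_exps_deg_le:
  assumes "s < n" "j < card (K s)" "j \<le> d"
  shows "card {e \<in> reduced_exps n K \<inter> exps_deg_le n d. e s = j} =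
    card (reduced_exps (n - 1) (drop_set K s) \<inter> exps_deg_le (n - 1) (d - j))"
proof -
  have "{e \<in> reduced_exps n K \<inter> exps_deg_le n d. e s = j} =
      {e. e s = j \<and> drop_coord s e \<in> reduced_exps (n - 1) (drop_set K s) \<inter> exps_deg_le (n - 1) (d - j)}"
    using assms reduced_exps_drop_coord_iff exps_deg_le_drop_coord_iff by fastforce
  then show ?thesis
    by (simp only: card_drop_coord_fiber)
qed

lemma dim_Xs_eq_card_fiber:
  fixes K :: "nat \<Rightarrow> 'a::{finite, field} set"
  assumes "s < n" "j < card (K s)"
  shows "dim_Xs n K s (int d - int j) = int (card {e \<in> reduced_exps n K \<inter> exps_deg_le n d. e s = j})"
proof (cases "j \<le> d")
  case True
  then have "dim_Xs n K s (int d - int j) = int (code_dim (aff_code (n - 1) (drop_set K s) (d - j)))"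
    by (simp add: dim_Xs_def nat_diff_distrib)
  also have "\<dots> = int (card (reduced_exps (n - 1) (drop_set K s) \<inter> exps_deg_le (n - 1) (d - j)))"
    by (simp only: code_dim_aff_code)
  also have "\<dots> = int (card {e \<in> reduced_exps n K \<inter> exps_deg_le n d. e s = j})"
    by (simp only: card_fiber_reduced_exps_deg_le[of s n j K d, OF assms True])
  finally show ?thesis .
next
  case False
  with assms(1) have "{e \<in> reduced_exps n K \<inter> exps_deg_le n d. e s = j} = {}"
    using exp_le_deg by fastforce
  with False show ?thesis
    by (simp only:) (simp add: dim_Xs_def)
qed

lemma card_eq_card_below_plus_card_fibers:
  fixes f :: "'a \<Rightarrow> nat"
  assumes "finite B" "\<And>x. x \<in> B \<Longrightarrow> f x < m"
  shows "card B = card {x \<in> B. f x < r} + (\<Sum>j\<in>{r..<m}. card {x \<in> B. f x = j})"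
proof -
  have "{x \<in> B. \<not> f x < r} = (\<Union>j\<in>{r..<m}. {x \<in> B. f x = j})"
    using assms(2) by (auto simp: not_less)
  then have "card {x \<in> B. \<not> f x < r} = (\<Sum>j\<in>{r..<m}. card {x \<in> B. f x = j})"
    using assms(1) by (simp only:) (rule card_UN_disjoint; auto)
  moreover have "card B = card {x \<in> B. f x < r} + card {x \<in> B. \<not> f x < r}"
    using assms(1) by (subst card_Un_disjoint[symmetric]) (auto intro: arg_cong[of _ _ card])
  ultimately show ?thesis
    by simp
qed

lemma sum_dim_Xs_eq_sum_card_fibers:
  fixes K :: "nat \<Rightarrow> 'a::{finite, field} set"
  assumes "s < n" "\<delta> \<le> card (K s)"
  defines "r \<equiv> card (K s) + 1 - \<delta>"
  shows "(\<Sum>i\<in>{0..int \<delta> - 2}. dim_Xs n K s (int d - int r - i)) =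
    (\<Sum>j\<in>{r..<card (K s)}. int (card {e \<in> reduced_exps n K \<inter> exps_deg_le n d. e s = j}))"
proof (rule sum.reindex_bij_witness[of _ "\<lambda>j. int (j - r)" "\<lambda>i. r + nat i"])
  fix i assume i: "i \<in> {0..int \<delta> - 2}"
  then have "r + nat i < card (K s)"
    using assms(2) by (auto simp: r_def)
  moreover have "int d - int r - i = int d - int (r + nat i)"
    using i by simp
  ultimately show "int (card {e \<in> reduced_exps n K \<inter> exps_deg_le n d. e s = r + nat i}) =
      dim_Xs n K s (int d - int r - i)"
    by (simp only: dim_Xs_eq_card_fiber[OF assms(1)])
qed (use assms(2) in \<open>auto simp: r_def\<close>)

lemma code_dim_quasi_code_eq_code_dim_aff_code:
  fixes K :: "nat \<Rightarrow> 'a::{finite, field} set"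
  assumes "s < n" "d < card (K s) + 1 - \<delta>"
  shows "code_dim (quasi_code n K \<delta> s d) = code_dim (aff_code n K d)"
proof -
  have "{e \<in> reduced_exps n K \<inter> exps_deg_le n d. e s < card (K s) + 1 - \<delta>} =
      reduced_exps n K \<inter> exps_deg_le n d"
    using assms exp_le_deg[of _ n d s] by fastforce
  then show ?thesis
    by (simp add: code_dim_quasi_code code_dim_aff_code)
qed

lemma int_code_dim_quasi_code:
  fixes K :: "nat \<Rightarrow> 'a::{finite, field} set"
  assumes "s < n" "\<delta> \<le> card (K s)"
  shows "int (code_dim (quasi_code n K \<delta> s d)) = int (code_dim (aff_code n K d)) -
    (\<Sum>i\<in>{0..int \<delta> - 2}. dim_Xs n K s (int d - int (card (K s) + 1 - \<delta>) - i))"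
proof -
  let ?B = "reduced_exps n K \<inter> exps_deg_le n d"
  have "card ?B = card {e \<in> ?B. e s < card (K s) + 1 - \<delta>} +
      (\<Sum>j\<in>{card (K s) + 1 - \<delta>..<card (K s)}. card {e \<in> ?B. e s = j})"
    using assms(1)
    by (intro card_eq_card_below_plus_card_fibers) (auto simp: finite_reduced_exps reduced_exps_less_card)
  then show ?thesis
    unfolding code_dim_quasi_code code_dim_aff_code sum_dim_Xs_eq_sum_card_fibers[where K = K, OF assms]
    by simp
qed

theorem mainTheorem4:
  fixes K :: "nat \<Rightarrow> 'a::{finite, field} set"
    and n s \<delta> :: nat and d :: int
  assumes "\<And>i. i < n \<Longrightarrow> K i \<noteq> {}"
    and "s < n"
    and "\<delta> \<ge> 2"
    and "int (card (K s)) - int \<delta> + 1 \<ge> 1"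
    and "1 \<le> d"
    and "d \<le> (\<Sum>i\<in>{..<n} - {s}. int (card (K i)) - 1) + int (card (K s)) - int \<delta>"
  shows "(d < int (card (K s)) - int \<delta> + 1 \<longrightarrow>
            code_dim (quasi_code n K \<delta> s (nat d)) = code_dim (aff_code n K (nat d)))
       \<and> (int (card (K s)) - int \<delta> + 1 \<le> d \<longrightarrow>
            int (code_dim (quasi_code n K \<delta> s (nat d))) =
              int (code_dim (aff_code n K (nat d)))
              - (\<Sum>i\<in>{0..int \<delta> - 2}. dim_Xs n K s (d - (int (card (K s)) - int \<delta> + 1) - i)))"
proof -
  obtain D where d: "d = int D"
    using assms(5) nonneg_int_cases[of d] by (metis zero_le_one order_trans)
  have \<delta>: "\<delta> \<le> card (K s)" and r: "int (card (K s)) - int \<delta> + 1 = int (card (K s) + 1 - \<delta>)"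
    using assms(4) by auto
  show ?thesis
    unfolding d r nat_int
    by (simp add: code_dim_quasi_code_eq_code_dim_aff_code[OF assms(2)]
        int_code_dim_quasi_code[where K = K, OF assms(2) \<delta>])
qed

end
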